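(* There exists a function $\rho$ from the set of all (finite) instruction sequences to the set of closed terms of BTA extended with explicit substitution such that for every instruction sequence $P$: $\mathrm{elim}(\rho(P))$ is identical to $|P|$, and $\mathrm{size}(\rho(P))\le 4\cdot\mathrm{len}(P)+1$.
   Context: Fix a set of basic instructions (actions). A primitive instruction is one of: $a$, $+a$, $-a$ (for a basic instruction $a$), $\#l$ ($l\in\mathbb N$), or $!$. An instruction sequence is a finite nonempty sequence $P=u_1;\dots;u_k$ of primitive instructions; $\mathrm{len}(P)=k$. Terms of BTA with explicit substitution: fix a countably infinite set of variables; terms are variables $x$, the constants $S$ (termination) and $D$ (deadlock), postconditional compositions $p\trianglelefteq a\trianglerighteq q$ for terms $p,q$ and basic instruction $a$, and substitutions $[p/x]q$ for terms $p,q$ and variable $x$. Write $a\circ p$ for $p\trianglelefteq a\trianglerighteq p$. A term is closed if it has no variable occurrences outside the bound position of substitution... more precisely, closed means $\mathrm{elim}$ of it contains no variables. Size: $\mathrm{size}(x)=\mathrm{size}(S)=\mathrm{size}(D)=1$, $\mathrm{size}(p\trianglelefteq a\trianglerighteq q)=\mathrm{size}(p)+\mathrm{size}(q)+1$, $\mathrm{size}([p/x]q)=\mathrm{size}(p)+\mathrm{size}(q)+1$. Substitution elimination $\mathrm{elim}$: $\mathrm{elim}(x)=x$, $\mathrm{elim}(S)=S$, $\mathrm{elim}(D)=D$, $\mathrm{elim}(p\trianglelefteq a\trianglerighteq q)=\mathrm{elim}(p)\trianglelefteq a\trianglerighteq\mathrm{elim}(q)$, and $\mathrm{elim}([p/x]q)$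 is obtained from $\mathrm{elim}(q)$ by replacing every occurrence of $x$ by $\mathrm{elim}(p)$ (this corresponds to the axioms $[p/x]x=p$, $[p/x]y=y$ for $y\ne x$, $[p/x]S=S$, $[p/x]D=D$, $[p/x](q\trianglelefteq a\trianglerighteq r)=([p/x]q)\trianglelefteq a\trianglerighteq([p/x]r)$). Thread extraction $|\cdot|$ maps instruction sequences to substitution-free closed terms by: $|a|=a\circ D$; $|a;Y|=a\circ|Y|$; $|+a|=a\circ D$; $|+a;Y|=|Y|\trianglelefteq a\trianglerighteq|\#2;Y|$; $|-a|=a\circ D$; $|-a;Y|=|\#2;Y|\trianglelefteq a\trianglerighteq|Y|$; $|\#l|=D$; $|\#0;Y|=D$; $|\#1;Y|=|Y|$; $|\#(l+2);u|=D$ for a primitive instruction $u$; $|\#(l+2);u;Y|=|\#(l+1);Y|$; $|!|=S$; $|!;Y|=S$. *)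

theory Defs
  imports Main
begin

datatype 'a prim = Basic 'a | PTest 'a | NTest 'a | Jump nat | Halt

text \<open>Terms of BTA with explicit substitution; variables are indexed by nat.
  Subst p x q stands for [p/x]q.\<close>
datatype 'a bterm = Var nat | S | D | PC "'a bterm" 'a "'a bterm" | Subst "'a bterm" nat "'a bterm"

definition postfix :: "'a \<Rightarrow> 'a bterm \<Rightarrow> 'a bterm" where
  "postfix a p = PC p a p"

fun tsize :: "'a bterm \<Rightarrow> nat" where
  "tsize (Var x) = 1"
| "tsize S = 1"
| "tsize D = 1"
| "tsize (PC p a q) = tsize p + tsize q + 1"
| "tsize (Subst p x q) = tsize p + tsize q + 1"

fun repl :: "'a bterm \<Rightarrow> nat \<Rightarrow> 'a bterm \<Rightarrow> 'a bterm" where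
  "repl r x (Var y) = (if y = x then r else Var y)"
| "repl r x S = S"
| "repl r x D = D"
| "repl r x (PC p a q) = PC (repl r x p) a (repl r x q)"
| "repl r x (Subst p y q) = Subst (repl r x p) y (repl r x q)"

fun elim :: "'a bterm \<Rightarrow> 'a bterm" where
  "elim (Var x) = Var x"
| "elim S = S"
| "elim D = D"
| "elim (PC p a q) = PC (elim p) a (elim q)"
| "elim (Subst p x q) = repl (elim p) x (elim q)"

fun vars :: "'a bterm \<Rightarrow> nat set" where
  "vars (Var x) = {x}"
| "vars S = {}"
| "vars D = {}"
| "vars (PC p a q) = vars p \<union> vars q"
| "vars (Subst p x q) = vars p \<union> vars q"

definition closed :: "'a bterm \<Rightarrow> bool" where
  "closed t \<longleftrightarrow> vars (elim t) = {}"

fun is_jump :: "'a prim \<Rightarrow> bool" where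
  "is_jump (Jump l) = True"
| "is_jump _ = False"

text \<open>Thread extraction (instruction sequences are nonempty lists; the value on [] is junk).\<close>
function extr :: "'a prim list \<Rightarrow> 'a bterm" where
  "extr [] = D"
| "extr [Basic a] = postfix a D"
| "extr (Basic a # y # Y) = postfix a (extr (y # Y))"
| "extr [PTest a] = postfix a D"
| "extr (PTest a # y # Y) = PC (extr (y # Y)) a (extr (Jump 2 # y # Y))"
| "extr [NTest a] = postfix a D"
| "extr (NTest a # y # Y) = PC (extr (Jump 2 # y # Y)) a (extr (y # Y))"
| "extr [Jump l] = D"
| "extr (Jump 0 # y # Y) = D"
| "extr (Jump (Suc 0) # y # Y) = extr (y # Y)"
| "extr [Jump (Suc (Suc l)), u] = D"
| "extr (Jump (Suc (Suc l)) # u # y # Y) = extr (Jump (Suc l) # y # Y)"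
| "extr [Halt] = S"
| "extr (Halt # y # Y) = S"
  by pat_completeness auto
termination
  by (relation "measure (\<lambda>xs. 2 * length xs + (case xs of [] \<Rightarrow> 0 | x # _ \<Rightarrow> if is_jump x then 0 else 1))") auto

end

theory Submission
  imports Defs
begin

(* Number the positions of P = u_0;...;u_{n-1} by 0..n-1 and let the
   variable x_i stand for the thread |u_i;...;u_{n-1}| of the suffix starting at i.
   Thread extraction satisfies a system of equations x_i = L_i, where the
   "local thread" L_i has size at most 3 and mentions only variables x_j with
   i < j < n (a positive test, for instance, gives L_i = x_{i+1} <| a |> x_{i+2};
   positions at or beyond n are replaced by D).
   The witness is  rho(P) = [L_{n-1}/x_{n-1}] ... [L_1/x_1] [L_0/x_0] x_0,
   of size 4n+1.  Eliminating the substitutions from the inside out, after m steps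
   the result mentions only x_m,...,x_{n-1} and becomes |P| once each x_j is
   instantiated by the suffix thread |u_j;...|.  For m = n this yields closedness
   and elim(rho(P)) = |P|. *)

text \<open>Replace every variable x by g x (under substitution nodes as well); it is
  used to read off the meaning of an open term under an assignment of threads.\<close>
fun inst :: "(nat \<Rightarrow> 'a bterm) \<Rightarrow> 'a bterm \<Rightarrow> 'a bterm" where
  "inst g (Var x) = g x"
| "inst g S = S"
| "inst g D = D"
| "inst g (PC p a q) = PC (inst g p) a (inst g q)"
| "inst g (Subst p x q) = Subst (inst g p) x (inst g q)"

lemma inst_repl: "inst g (repl r x t) = inst (g(x := inst g r)) t"
  by (induction t) auto

lemma inst_cong: "(\<And>j. j \<in> vars t \<Longrightarrow> g j = h j) \<Longrightarrow> inst g t = inst h t"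
  by (induction t) auto

lemma inst_no_vars: "vars t = {} \<Longrightarrow> inst g t = t"
  by (induction t) auto

lemma vars_repl: "vars (repl r x t) \<subseteq> (vars t - {x}) \<union> vars r"
  by (induction t) auto

lemma extr_Jump_0: "extr (Jump 0 # Y) = D"
  by (cases Y) auto

lemma extr_Jump_Suc:
  "extr (Jump (Suc l) # Y) = (if l < length Y then extr (drop l Y) else D)"
proof (induction l arbitrary: Y)
  case 0
  then show ?case by (cases Y) auto
next
  case (Suc l)
  then show ?case
    by (cases Y; cases "tl Y") auto
qed

lemma extr_Jump_2: "extr (Jump 2 # y # Y) = extr Y"
  using extr_Jump_Suc[of 1 "y # Y"] by (cases Y) (auto simp: numeral_2_eq_2)

definition local_thread :: "(nat \<Rightarrow> 'a bterm) \<Rightarrow> 'a prim list \<Rightarrow> nat \<Rightarrow> 'a bterm" where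
  "local_thread v P i = (case P ! i of
       Basic a \<Rightarrow> postfix a (v (i + 1))
     | PTest a \<Rightarrow> PC (v (i + 1)) a (v (i + 2))
     | NTest a \<Rightarrow> PC (v (i + 2)) a (v (i + 1))
     | Jump l \<Rightarrow> (if l = 0 then D else v (i + l))
     | Halt \<Rightarrow> S)"

lemma inst_local_thread: "inst g (local_thread v P i) = local_thread (inst g \<circ> v) P i"
  by (cases "P ! i") (auto simp: local_thread_def postfix_def)

lemma extr_drop_unfold:
  assumes "i < length P"
  shows "extr (drop i P) = local_thread (\<lambda>j. extr (drop j P)) P i"
proof -
  have split: "drop i P = P ! i # drop (Suc i) P"
    using assms by (simp add: Cons_nth_drop_Suc)
  have skip2: "drop (i + 2) P = drop 1 (drop (Suc i) P)"
    by simp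
  have skip: "extr (Jump (Suc l) # drop (Suc i) P) = extr (drop (i + Suc l) P)" for l
    using extr_Jump_Suc[of l "drop (Suc i) P"] by (auto simp: add.commute)
  show ?thesis
  proof (cases "P ! i")
    case (Jump l)
    then show ?thesis
      using split skip by (cases l) (auto simp: local_thread_def extr_Jump_0)
  qed (use split skip2 in \<open>cases "drop (Suc i) P"; auto simp: local_thread_def postfix_def extr_Jump_2\<close>)+
qed

definition eqn :: "'a prim list \<Rightarrow> nat \<Rightarrow> 'a bterm" where
  "eqn P i = local_thread (\<lambda>j. if j < length P then Var j else D) P i"

lemma elim_eqn: "elim (eqn P i) = eqn P i"
  by (cases "P ! i") (auto simp: eqn_def local_thread_def postfix_def)

text \<open>L_i refers only forward, which makes the elimination terminate in closed terms.\<close>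
lemma vars_eqn: "vars (eqn P i) \<subseteq> {i + 1..<length P}"
  by (cases "P ! i") (auto simp: eqn_def local_thread_def postfix_def)

lemma tsize_eqn: "tsize (eqn P i) \<le> 3"
  by (cases "P ! i") (auto simp: eqn_def local_thread_def postfix_def)

fun build :: "'a prim list \<Rightarrow> nat \<Rightarrow> 'a bterm" where
  "build P 0 = Var 0"
| "build P (Suc m) = Subst (eqn P m) m (build P m)"

lemma tsize_build: "tsize (build P m) \<le> 4 * m + 1"
proof (induction m)
  case (Suc m)
  then show ?case using tsize_eqn[of P m] by simp
qed simp

lemma vars_elim_build:
  assumes "P \<noteq> []"
  shows "vars (elim (build P m)) \<subseteq> {m..<length P}"
proof (induction m)
  case 0
  then show ?case using assms by simp
next
  case (Suc m)
  have "vars (elim (build P (Suc m))) \<subseteq> (vars (elim (build P m)) - {m}) \<union> vars (eqn P m)"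
    using vars_repl by (simp add: elim_eqn)
  also have "\<dots> \<subseteq> {Suc m..<length P}"
    using Suc.IH vars_eqn[of P m] by auto
  finally show ?case .
qed

lemma inst_elim_build:
  assumes "m \<le> length P"
  shows "inst (\<lambda>j. if j < m then Var j else extr (drop j P)) (elim (build P m)) = extr P"
  using assms
proof (induction m)
  case 0
  then show ?case by simp
next
  case (Suc m)
  let ?E = "\<lambda>j. extr (drop j P)"
  let ?g = "\<lambda>j. if j < Suc m then Var j else ?E j"
  let ?h = "\<lambda>j. if j < m then Var j else ?E j"
  have "inst ?g (eqn P m) = inst ?E (eqn P m)"
    by (rule inst_cong) (use vars_eqn[of P m] in auto)
  also have "\<dots> = local_thread ?E P m"
    unfolding eqn_def inst_local_thread by (rule arg_cong[where f="\<lambda>v. local_thread v P m"]) auto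
  also have "\<dots> = ?E m"
    using extr_drop_unfold[of m P] Suc.prems by simp
  finally have "?g(m := inst ?g (eqn P m)) = ?h"
    by (auto simp: fun_eq_iff)
  moreover have "inst ?g (elim (build P (Suc m))) = inst (?g(m := inst ?g (eqn P m))) (elim (build P m))"
    by (simp add: elim_eqn inst_repl)
  ultimately show ?case
    using Suc by simp
qed

theorem theoremA:
  shows "\<exists>\<rho> :: 'a prim list \<Rightarrow> 'a bterm. \<forall>P. P \<noteq> [] \<longrightarrow>
           closed (\<rho> P) \<and> elim (\<rho> P) = extr P \<and> tsize (\<rho> P) \<le> 4 * length P + 1"
proof (intro exI allI impI conjI)
  fix P :: "'a prim list"
  assume "P \<noteq> []"
  then have no_vars: "vars (elim (build P (length P))) = {}"
    using vars_elim_build[of P "length P"] by auto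
  then show "closed (build P (length P))"
    unfolding closed_def .
  show "elim (build P (length P)) = extr P"
    using inst_elim_build[of "length P" P] inst_no_vars[OF no_vars] by simp
  show "tsize (build P (length P)) \<le> 4 * length P + 1"
    by (rule tsize_build)
qed

end
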